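(* Let $n,a,b$ be positive integers and $c$ a nonnegative integer. The polytopes $\mathcal F_{k^{a,b,c}_{n+2}(S)}$, $S\subseteq[n]$, are interior disjoint and satisfy $$\mathcal F_{k^{a,b+1,c}_{n+2}}\equiv\bigcup_{S\subseteq[n]}\mathcal F_{k^{a,b,c}_{n+2}(S)};$$ that is, $\mathcal F_{k^{a,b+1,c}_{n+2}}$ is integrally equivalent to a union of $2^n$ polytopes $P_S$ ($S\subseteq[n]$) with pairwise disjoint interiors, where each $P_S$ is integrally equivalent to $\mathcal F_{k^{a,b,c}_{n+2}(S)}$.
   Context: For a directed multigraph $G$ on $\{0,\dots,n+1\}$ with edges $(i,j)$ oriented $i\to j$, $i<j$, $\mathcal F_G$ is the flow polytope: the set of $f\in\mathbb R_{\ge0}^{E(G)}$ such that the net flow (outgoing minus incoming) is $1$ at vertex $0$, $-1$ at vertex $n+1$ and $0$ at every other vertex. Two polytopes $P\subset\mathbb R^p$, $Q\subset\mathbb R^q$ are integrally equivalent ($P\equiv Q$) if there is an affine map $\mathbb R^p\to\mathbb R^q$ restricting to a bijection $P\to Q$ and to a bijection $\mathrm{aff}(P)\cap\mathbb Z^p\to\mathrm{aff}(Q)\cap\mathbb Z^q$. $k_{n+2}^{a,b,c}$ is the multigraph on $\{0,\dots,n+1\}$ with edge $(0,i)$ of multiplicity $a$ and $(i,n+1)$ of multiplicity $b$ for each $i\in[n]$, and edge $(i,j)$ of multiplicity $c$ for $1\le i<j\le n$. For $S\subseteq[n]$, $k^{a,b,c}_{n+2}(S)$ is obtained from $k^{a,b,c}_{n+2}$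 by adding $n$ edges $(0,n+1)$ and, for each $i\in S$, deleting one of the $a$ copies of $(0,i)$ and adding one edge $(i,n+1)$. *)

theory Defs
  imports "HOL-Analysis.Analysis"
begin

text \<open>Points of R^p are represented as functions nat => real vanishing
outside the index set {..<p}.\<close>

definition Rsp :: "nat \<Rightarrow> (nat \<Rightarrow> real) set" where
  "Rsp p = {x. \<forall>i. p \<le> i \<longrightarrow> x i = 0}"

definition Zpts :: "(nat \<Rightarrow> real) set" where
  "Zpts = {x. \<forall>i. x i \<in> \<int>}"

definition aff :: "(nat \<Rightarrow> real) set \<Rightarrow> (nat \<Rightarrow> real) set" where
  "aff P = {y. \<exists>X u. finite X \<and> X \<noteq> {} \<and> X \<subseteq> P \<and> sum u X = 1 \<and>
                  y = (\<lambda>i. \<Sum>x\<in>X. u x * x i)}"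

definition affine_map :: "nat \<Rightarrow> nat \<Rightarrow> ((nat \<Rightarrow> real) \<Rightarrow> (nat \<Rightarrow> real)) \<Rightarrow> bool" where
  "affine_map p q T \<longleftrightarrow> (\<exists>(A::nat \<Rightarrow> nat \<Rightarrow> real) (c::nat \<Rightarrow> real).
      \<forall>x. T x = (\<lambda>j. if j < q then (\<Sum>i<p. A j i * x i) + c j else 0))"

definition int_equiv :: "nat \<Rightarrow> (nat \<Rightarrow> real) set \<Rightarrow> nat \<Rightarrow> (nat \<Rightarrow> real) set \<Rightarrow> bool" where
  "int_equiv p P q Q \<longleftrightarrow> P \<subseteq> Rsp p \<and> Q \<subseteq> Rsp q \<and>
     (\<exists>T. affine_map p q T \<and> bij_betw T P Q \<and>
          bij_betw T (aff P \<inter> Rsp p \<inter> Zpts) (aff Q \<inter> Rsp q \<inter> Zpts))"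

definition distq :: "nat \<Rightarrow> (nat \<Rightarrow> real) \<Rightarrow> (nat \<Rightarrow> real) \<Rightarrow> real" where
  "distq q x y = sqrt (\<Sum>i<q. (x i - y i)^2)"

definition interior_in :: "nat \<Rightarrow> (nat \<Rightarrow> real) set \<Rightarrow> (nat \<Rightarrow> real) set \<Rightarrow> (nat \<Rightarrow> real) set" where
  "interior_in q U P = {x \<in> P. \<exists>e>0. \<forall>y \<in> aff U. distq q x y < e \<longrightarrow> y \<in> P}"

text \<open>Multigraphs on {0..n+1}: lists of edges (i,j), i<j; edge e is G!e,
  the edge set is indexed by {..<length G}.\<close>
type_synonym mgraph = "(nat \<times> nat) list"

definition netflow :: "mgraph \<Rightarrow> (nat \<Rightarrow> real) \<Rightarrow> nat \<Rightarrow> real" where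
  "netflow G f v = (\<Sum>e<length G. if fst (G!e) = v then f e else 0)
                 - (\<Sum>e<length G. if snd (G!e) = v then f e else 0)"

definition flow_polytope :: "nat \<Rightarrow> mgraph \<Rightarrow> (nat \<Rightarrow> real) set" where
  "flow_polytope t G = {f. f \<in> Rsp (length G) \<and> (\<forall>e<length G. 0 \<le> f e) \<and>
      (\<forall>v\<le>t. netflow G f v = (if v = 0 then 1 else if v = t then -1 else 0))}"

definition kgraph :: "nat \<Rightarrow> nat \<Rightarrow> nat \<Rightarrow> nat \<Rightarrow> mgraph" where
  "kgraph a b c n =
     concat (map (\<lambda>i. replicate a (0, i)) [1..<n+1]) @
     concat (map (\<lambda>i. replicate b (i, n+1)) [1..<n+1]) @
     concat (map (\<lambda>i. concat (map (\<lambda>j. replicate c (i, j)) [i+1..<n+1])) [1..<n+1])"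

definition kgraphS :: "nat \<Rightarrow> nat \<Rightarrow> nat \<Rightarrow> nat \<Rightarrow> nat set \<Rightarrow> mgraph" where
  "kgraphS a b c n S =
     concat (map (\<lambda>i. replicate (if i \<in> S then a - 1 else a) (0, i)) [1..<n+1]) @
     concat (map (\<lambda>i. replicate (if i \<in> S then b + 1 else b) (i, n+1)) [1..<n+1]) @
     concat (map (\<lambda>i. concat (map (\<lambda>j. replicate c (i, j)) [i+1..<n+1])) [1..<n+1]) @
     replicate n (0, n+1)"

end

(* Fix one copy of each edge (0,i) and (i,n+1) of k^{a,b+1,c}_{n+2}. The hyperplanes
   f(0,i) = f(i,n+1) cut its flow polytope F into the 2^n cells where f(0,i) <= f(i,n+1)
   exactly for i in S. On the cell of S, rerouting for every i the smaller of these two flows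
   along a new edge (0,n+1), and subtracting it from the larger one, is a unimodular shear; it
   maps the cell onto the flow polytope of k^{a,b,c}_{n+2}(S), up to the order of the edges.
   Interiors are disjoint: since b+1 >= 2, flow can be moved between two copies of (i,n+1)
   without leaving the affine hull of F, so interior points of the cell of S satisfy
   f(0,i) < f(i,n+1) strictly for i in S. *)

theory Submission
  imports Defs "HOL-Combinatorics.List_Permutation"
begin

section \<open>Integral equivalence\<close>

lemma aff_subset_Rsp: "P \<subseteq> Rsp p \<Longrightarrow> aff P \<subseteq> Rsp p"
  unfolding aff_def Rsp_def by (auto intro!: sum.neutral)

lemma affine_map_Rsp: "affine_map p q T \<Longrightarrow> T x \<in> Rsp q"
  unfolding affine_map_def Rsp_def by auto

lemma affine_map_affine_comb:
  assumes "affine_map p q T" "finite X" "sum u X = 1"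
  shows "T (\<lambda>i. \<Sum>x\<in>X. u x * x i) = (\<lambda>j. \<Sum>x\<in>X. u x * T x j)"
proof
  obtain A c where T: "\<And>x. T x = (\<lambda>j. if j < q then (\<Sum>i<p. A j i * x i) + c j else 0)"
    using assms(1) unfolding affine_map_def by blast
  fix j
  have "(\<Sum>i<p. A j i * (\<Sum>x\<in>X. u x * x i)) + c j
      = (\<Sum>x\<in>X. u x * (\<Sum>i<p. A j i * x i)) + (\<Sum>x\<in>X. u x) * c j"
    using assms by (simp add: sum_distrib_left algebra_simps sum.swap[of _ "{..<p}"])
  also have "\<dots> = (\<Sum>x\<in>X. u x * ((\<Sum>i<p. A j i * x i) + c j))"
    by (simp add: sum_distrib_right distrib_left sum.distrib)
  finally show "T (\<lambda>i. \<Sum>x\<in>X. u x * x i) j = (\<Sum>x\<in>X. u x * T x j)"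
    by (simp add: T)
qed

lemma image_aff_subset_aff_image:
  assumes T: "affine_map p q T" and inj: "inj_on T P"
  shows "T ` aff P \<subseteq> aff (T ` P)"
proof
  fix z assume "z \<in> T ` aff P"
  then obtain X u where X: "finite X" "X \<noteq> {}" "X \<subseteq> P" "sum u X = 1"
    and z: "z = T (\<lambda>i. \<Sum>x\<in>X. u x * x i)" unfolding aff_def by blast
  have injX: "inj_on T X" using inj X(3) by (rule inj_on_subset)
  define w where "w = u \<circ> the_inv_into X T"
  have wu: "\<And>x. x \<in> X \<Longrightarrow> w (T x) = u x"
    unfolding w_def using injX by (simp add: the_inv_into_f_f)
  have "sum w (T ` X) = 1" "z = (\<lambda>j. \<Sum>y\<in>T ` X. w y * y j)"
    using X(4) affine_map_affine_comb[OF T X(1) X(4)] z by (simp_all add: sum.reindex[OF injX] wu)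
  then show "z \<in> aff (T ` P)" unfolding aff_def using X by blast
qed

lemma aff_image_subset_image_aff:
  assumes T: "affine_map p q T" and inj: "inj_on T P"
  shows "aff (T ` P) \<subseteq> T ` aff P"
proof
  fix z assume "z \<in> aff (T ` P)"
  then obtain Y w where Y: "finite Y" "Y \<noteq> {}" "Y \<subseteq> T ` P" "sum w Y = 1"
    and z: "z = (\<lambda>i. \<Sum>y\<in>Y. w y * y i)" unfolding aff_def by blast
  define X where "X = {x\<in>P. T x \<in> Y}"
  have injX: "inj_on T X" using inj unfolding X_def by (rule inj_on_subset) auto
  have TX: "T ` X = Y" using Y(3) unfolding X_def by auto
  have X: "finite X" "X \<noteq> {}" "X \<subseteq> P"
    using finite_imageD[of T X] TX Y(1,2) injX unfolding X_def by auto
  have sum1: "sum (w \<circ> T) X = 1" using Y(4) TX sum.reindex[OF injX, of w] by simp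
  have "z = T (\<lambda>i. \<Sum>x\<in>X. (w \<circ> T) x * x i)"
    unfolding z affine_map_affine_comb[OF T X(1) sum1] TX[symmetric]
    by (simp add: sum.reindex[OF injX])
  moreover have "(\<lambda>i. \<Sum>x\<in>X. (w \<circ> T) x * x i) \<in> aff P"
    unfolding aff_def using X sum1 by blast
  ultimately show "z \<in> T ` aff P" by blast
qed

lemma aff_image_affine_map: "affine_map p q T \<Longrightarrow> inj_on T P \<Longrightarrow> aff (T ` P) = T ` aff P"
  by (intro equalityI aff_image_subset_image_aff image_aff_subset_aff_image)

lemma int_equiv_affine_inverse:
  assumes T: "affine_map p p T" and U: "affine_map p p U"
    and UT: "\<And>x. x \<in> Rsp p \<Longrightarrow> U (T x) = x"
    and TZ: "\<And>x. x \<in> Zpts \<Longrightarrow> T x \<in> Zpts"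
    and UZ: "\<And>x. x \<in> Zpts \<Longrightarrow> U x \<in> Zpts"
    and P: "P \<subseteq> Rsp p"
  shows "int_equiv p P p (T ` P)"
proof -
  have inj: "inj_on T (Rsp p)" by (metis UT inj_on_inverseI)
  have aP: "aff P \<subseteq> Rsp p" using P by (rule aff_subset_Rsp)
  have aTP: "aff (T ` P) = T ` aff P"
    using aff_image_affine_map[OF T] inj P by (meson inj_on_subset)
  have "T ` (aff P \<inter> Rsp p \<inter> Zpts) = aff (T ` P) \<inter> Rsp p \<inter> Zpts"
  proof
    show "T ` (aff P \<inter> Rsp p \<inter> Zpts) \<subseteq> aff (T ` P) \<inter> Rsp p \<inter> Zpts"
      using aTP affine_map_Rsp[OF T] TZ by blast
    show "aff (T ` P) \<inter> Rsp p \<inter> Zpts \<subseteq> T ` (aff P \<inter> Rsp p \<inter> Zpts)"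
    proof
      fix y assume y: "y \<in> aff (T ` P) \<inter> Rsp p \<inter> Zpts"
      then obtain x where x: "x \<in> aff P" "y = T x" using aTP by auto
      have "x = U y" using UT x aP by auto
      then have "x \<in> Zpts" using UZ y by blast
      then show "y \<in> T ` (aff P \<inter> Rsp p \<inter> Zpts)" using x aP by blast
    qed
  qed
  moreover have "inj_on T (aff P \<inter> Rsp p \<inter> Zpts)" "inj_on T P"
    using inj P by (auto intro: inj_on_subset)
  ultimately show ?thesis
    unfolding int_equiv_def bij_betw_def using P T affine_map_Rsp[OF T] by blast
qed

lemma affine_map_comp:
  assumes "affine_map p q T" "affine_map q r U" shows "affine_map p r (U \<circ> T)"
proof -
  obtain A c where T: "\<And>x. T x = (\<lambda>j. if j < q then (\<Sum>i<p. A j i * x i) + c j else 0)"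
    using assms(1) unfolding affine_map_def by blast
  obtain B d where U: "\<And>x. U x = (\<lambda>k. if k < r then (\<Sum>j<q. B k j * x j) + d k else 0)"
    using assms(2) unfolding affine_map_def by blast
  have BT: "(\<Sum>j<q. B k j * T x j) = (\<Sum>i<p. (\<Sum>j<q. B k j * A j i) * x i) + (\<Sum>j<q. B k j * c j)"
    for k x
  proof -
    have "(\<Sum>j<q. B k j * T x j) = (\<Sum>j<q. (\<Sum>i<p. B k j * A j i * x i)) + (\<Sum>j<q. B k j * c j)"
      by (simp add: T distrib_left sum.distrib sum_distrib_left mult.assoc)
    then show ?thesis by (simp add: sum.swap[of _ "{..<q}"] sum_distrib_right)
  qed
  show ?thesis unfolding affine_map_def
    by (intro exI[of _ "\<lambda>k i. \<Sum>j<q. B k j * A j i"] exI[of _ "\<lambda>k. (\<Sum>j<q. B k j * c j) + d k"] allI ext)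
       (simp add: U BT add.assoc)
qed

lemma int_equiv_trans:
  assumes "int_equiv p P q Q" "int_equiv q Q r R" shows "int_equiv p P r R"
proof -
  obtain T where "affine_map p q T" "bij_betw T P Q"
      "bij_betw T (aff P \<inter> Rsp p \<inter> Zpts) (aff Q \<inter> Rsp q \<inter> Zpts)"
    using assms(1) unfolding int_equiv_def by blast
  moreover obtain U where "affine_map q r U" "bij_betw U Q R"
      "bij_betw U (aff Q \<inter> Rsp q \<inter> Zpts) (aff R \<inter> Rsp r \<inter> Zpts)"
    using assms(2) unfolding int_equiv_def by blast
  ultimately show ?thesis
    using assms affine_map_comp bij_betw_trans unfolding int_equiv_def by metis
qed

definition shear :: "nat \<Rightarrow> nat set \<Rightarrow> (nat \<Rightarrow> nat) \<Rightarrow> real \<Rightarrow> (nat \<Rightarrow> real) \<Rightarrow> nat \<Rightarrow> real" where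
  "shear p L m r x = (\<lambda>k. if k < p then x k + (if k \<in> L then r * x (m k) else 0) else 0)"

lemma affine_map_shear:
  assumes "m ` L \<subseteq> {..<p}" shows "affine_map p p (shear p L m r)"
  unfolding affine_map_def
proof (intro exI allI ext)
  fix x :: "nat \<Rightarrow> real" and k :: nat
  define A where "A = (\<lambda>k i. of_bool (i = k) + of_bool (k \<in> L \<and> i = m k) * r)"
  have "k < p \<Longrightarrow> (\<Sum>i<p. A k i * x i) = x k + (if k \<in> L then r * x (m k) else 0)"
    using assms unfolding A_def by (auto simp: distrib_right sum.distrib mult.assoc)
  then show "shear p L m r x k = (if k < p then (\<Sum>i<p. A k i * x i) + 0 else 0)"
    unfolding shear_def by simp
qed

lemma shear_inverse:
  assumes "m ` L \<inter> L = {}" "x \<in> Rsp p"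
  shows "shear p L m (- r) (shear p L m r x) = x"
  using assms unfolding shear_def Rsp_def by (fastforce split: if_splits)

lemma shear_Zpts: "r \<in> \<int> \<Longrightarrow> x \<in> Zpts \<Longrightarrow> shear p L m r x \<in> Zpts"
  unfolding shear_def Zpts_def by auto

lemma int_equiv_shear_image:
  assumes "m ` L \<subseteq> {..<p}" "m ` L \<inter> L = {}" "r \<in> \<int>" "P \<subseteq> Rsp p"
  shows "int_equiv p P p (shear p L m r ` P)"
  using assms
  by (intro int_equiv_affine_inverse[where U = "shear p L m (- r)"] affine_map_shear
      shear_inverse shear_Zpts) auto

definition permute_coords :: "nat \<Rightarrow> (nat \<Rightarrow> nat) \<Rightarrow> (nat \<Rightarrow> real) \<Rightarrow> nat \<Rightarrow> real" where
  "permute_coords p f x = (\<lambda>k. if k < p then x (f k) else 0)"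

lemma affine_map_permute_coords:
  assumes "f ` {..<p} \<subseteq> {..<p}" shows "affine_map p p (permute_coords p f)"
  unfolding affine_map_def
proof (intro exI allI ext)
  fix x :: "nat \<Rightarrow> real" and k :: nat
  have "k < p \<Longrightarrow> (\<Sum>i<p. of_bool (i = f k) * x i) = x (f k)"
    using assms by auto
  then show "permute_coords p f x k = (if k < p then (\<Sum>i<p. of_bool (i = f k) * x i) + 0 else 0)"
    unfolding permute_coords_def by simp
qed

lemma permute_coords_inverse:
  assumes "bij_betw f {..<p} {..<p}" "x \<in> Rsp p"
  shows "permute_coords p (inv_into {..<p} f) (permute_coords p f x) = x"
  using assms bij_betw_inv_into_right[OF assms(1)] bij_betw_apply[OF bij_betw_inv_into[OF assms(1)]]
  unfolding permute_coords_def Rsp_def by fastforce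

lemma int_equiv_permute_coords_image:
  assumes f: "bij_betw f {..<p} {..<p}" and P: "P \<subseteq> Rsp p"
  shows "int_equiv p P p (permute_coords p f ` P)"
proof (rule int_equiv_affine_inverse[where U = "permute_coords p (inv_into {..<p} f)",
      OF _ _ permute_coords_inverse[OF f]])
  have g: "bij_betw (inv_into {..<p} f) {..<p} {..<p}" using f by (rule bij_betw_inv_into)
  show "affine_map p p (permute_coords p f)" "affine_map p p (permute_coords p (inv_into {..<p} f))"
    using f g by (auto intro!: affine_map_permute_coords dest: bij_betw_imp_surj_on)
qed (auto simp: P permute_coords_def Zpts_def)

section \<open>Flow polytopes\<close>

definition incidence :: "nat \<times> nat \<Rightarrow> nat \<Rightarrow> real" where
  "incidence e v = of_bool (fst e = v) - of_bool (snd e = v)"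

lemma netflow_incidence: "netflow G f v = (\<Sum>e<length G. f e * incidence (G!e) v)"
  unfolding netflow_def incidence_def sum_subtractf[symmetric] by (rule sum.cong) auto

lemma incidence_split: "incidence (u, w) v = incidence (u, s) v + incidence (s, w) v"
  unfolding incidence_def by simp

lemma flow_polytope_Rsp: "flow_polytope t G \<subseteq> Rsp (length G)"
  unfolding flow_polytope_def by auto

lemma permute_coords_flow_polytope:
  assumes f: "bij_betw f {..<length G'} {..<length G}"
    and G': "\<And>i. i < length G' \<Longrightarrow> G' ! i = G ! f i"
    and x: "x \<in> flow_polytope t G"
  shows "permute_coords (length G') f x \<in> flow_polytope t G'"
proof -
  have "netflow G' (permute_coords (length G') f x) v = netflow G x v" for v
  proof -
    have "netflow G' (permute_coords (length G') f x) v = (\<Sum>i<length G'. x (f i) * incidence (G ! f i) v)"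
      unfolding netflow_incidence permute_coords_def by (rule sum.cong) (simp_all add: G')
    also have "\<dots> = netflow G x v"
      unfolding netflow_incidence by (rule sum.reindex_bij_betw[OF f])
    finally show ?thesis .
  qed
  then show ?thesis
    using x bij_betw_apply[OF f] unfolding flow_polytope_def permute_coords_def Rsp_def by auto
qed

lemma int_equiv_flow_polytope_mset:
  assumes "mset G' = mset G"
  shows "int_equiv (length G) (flow_polytope t G) (length G') (flow_polytope t G')"
proof -
  obtain f where f: "bij_betw f {..<length G'} {..<length G}" and G': "\<forall>i<length G'. G' ! i = G ! f i"
    using permutation_Ex_bij[OF assms] by blast
  define p where "p = length G"
  have len: "length G' = p" using assms mset_eq_length unfolding p_def by metis
  define g where "g = inv_into {..<p} f"
  have fp: "bij_betw f {..<p} {..<p}" and gp: "bij_betw g {..<p} {..<p}"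
    using f bij_betw_inv_into unfolding g_def len p_def by blast+
  have G: "G ! i = G' ! g i" if "i < p" for i
    using G' bij_betw_inv_into_right[OF fp] bij_betw_apply[OF gp] that unfolding g_def len by auto
  have "flow_polytope t G' = permute_coords p f ` flow_polytope t G"
  proof
    show "permute_coords p f ` flow_polytope t G \<subseteq> flow_polytope t G'"
      using permute_coords_flow_polytope[OF f] G' unfolding len by blast
    show "flow_polytope t G' \<subseteq> permute_coords p f ` flow_polytope t G"
    proof
      fix y assume y: "y \<in> flow_polytope t G'"
      then have "permute_coords p g y \<in> flow_polytope t G"
        using permute_coords_flow_polytope[of g G G' y t] gp G unfolding len p_def by auto
      moreover have "y \<in> Rsp p" using y flow_polytope_Rsp len by blast
      then have "y = permute_coords p f (permute_coords p g y)"
        using bij_betw_apply[OF fp] bij_betw_inv_into_left[OF fp]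
        unfolding g_def permute_coords_def Rsp_def by fastforce
      ultimately show "y \<in> permute_coords p f ` flow_polytope t G" by blast
    qed
  qed
  then show ?thesis
    using int_equiv_permute_coords_image[OF fp flow_polytope_Rsp[of t G, folded p_def]] len unfolding p_def by simp
qed

lemma flow_polytope_path:
  assumes "p < length G" "q < length G" "G ! p = (0, u)" "G ! q = (u, t)" "0 < t"
  shows "(\<lambda>k. if k = p \<or> k = q then 1 else 0) \<in> flow_polytope t G"
proof -
  have "p \<noteq> q" using assms by auto
  have "netflow G (\<lambda>k. if k = p \<or> k = q then 1 else 0) v
      = (\<Sum>e<length G. (if e = p then incidence (G ! e) v else 0) + (if e = q then incidence (G ! e) v else 0))"
    for v
    unfolding netflow_incidence using \<open>p \<noteq> q\<close> by (intro sum.cong) auto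
  then have "netflow G (\<lambda>k. if k = p \<or> k = q then 1 else 0) v = incidence (0, t) v" for v
    using assms(1-4) incidence_split[of 0 t v u] by (simp add: sum.distrib)
  then show ?thesis
    using assms unfolding flow_polytope_def Rsp_def by (auto simp: incidence_def)
qed

lemma aff_perturb:
  assumes "x \<in> U" "y \<in> U" "z \<in> U"
  shows "(\<lambda>i. x i + r * (y i - z i)) \<in> aff U"
proof -
  define X where "X = {x, y, z}"
  define u where "u w = (if w = x then 1 else 0) + (if w = y then r else 0) - (if w = z then r else 0)" for w
  have X: "finite X" "x \<in> X" "y \<in> X" "z \<in> X" unfolding X_def by auto
  have "(\<Sum>w\<in>X. u w * w i) = x i + r * (y i - z i)" for i
  proof -
    have "(\<Sum>w\<in>X. u w * w i) = (\<Sum>w\<in>X. (if w = x then x i else 0) + (if w = y then r * y i else 0)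
        - (if w = z then r * z i else 0))"
      unfolding u_def by (intro sum.cong) (auto simp: algebra_simps)
    then show ?thesis using X by (simp add: sum.distrib sum_subtractf algebra_simps)
  qed
  moreover have "sum u X = 1"
    unfolding u_def using X by (simp add: sum.distrib sum_subtractf)
  ultimately show ?thesis
    unfolding aff_def using assms X(1) by (intro CollectI exI[of _ X] exI[of _ u]) (auto simp: X_def)
qed

lemma interior_in_subset: "interior_in q U P \<subseteq> P"
  unfolding interior_in_def by blast

lemma interior_in_perturb:
  assumes x: "x \<in> interior_in q U P" "x \<in> U" and "y \<in> U" "z \<in> U"
  obtains r where "0 < r" "(\<lambda>i. x i + r * (y i - z i)) \<in> P"
proof -
  obtain e where e: "0 < e" and ball: "\<And>w. w \<in> aff U \<Longrightarrow> distq q x w < e \<Longrightarrow> w \<in> P"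
    using x(1) unfolding interior_in_def by blast
  define D where "D = sqrt (\<Sum>i<q. (y i - z i)^2)"
  define r where "r = e / (D + 1)"
  have D: "0 \<le> D" unfolding D_def by (simp add: sum_nonneg)
  then have r: "0 < r" unfolding r_def using e by simp
  have "distq q x (\<lambda>i. x i + r * (y i - z i)) = r * D"
    unfolding distq_def D_def using r
    by (simp add: power_mult_distrib sum_distrib_left[symmetric] real_sqrt_mult)
  also have "\<dots> < e" unfolding r_def using e D by (simp add: field_simps)
  finally show ?thesis
    using that r ball aff_perturb[OF x(2) assms(3,4)] by blast
qed

text \<open>Where
  \<open>m k\<close> carries at most the flow of \<open>k\<close>, moving the flow of \<open>m k\<close> onto an edge \<open>(0, t)\<close> and
  subtracting it from \<open>k\<close> is a unimodular shear.\<close>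

locale reroute =
  fixes G G' :: mgraph and t :: nat and L :: "nat set" and m :: "nat \<Rightarrow> nat"
  assumes length_G': "length G' = length G"
    and L_lt: "L \<subseteq> {..<length G}" and m_lt: "m ` L \<subseteq> {..<length G}"
    and inj_m: "inj_on m L" and m_disjoint: "m ` L \<inter> L = {}"
    and paths: "\<And>k. k \<in> L \<Longrightarrow>
      \<exists>u. (G ! m k = (0, u) \<and> G ! k = (u, t)) \<or> (G ! m k = (u, t) \<and> G ! k = (0, u))"
    and nth_G': "\<And>k. k < length G \<Longrightarrow> G' ! k = (if k \<in> m ` L then (0, t) else G ! k)"
begin

lemma netflow_shear: "netflow G' (shear (length G) L m (-1) x) v = netflow G x v"
proof -
  let ?y = "shear (length G) L m (-1) x"
  define d where "d k = ?y k * incidence (G' ! k) v - x k * incidence (G ! k) v" for k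
  have finite: "finite L" using L_lt finite_subset by blast
  have "d k = 0" if "k < length G" "k \<notin> L \<union> m ` L" for k
    using that nth_G' unfolding d_def shear_def by simp
  then have "(\<Sum>k<length G. d k) = sum d (L \<union> m ` L)"
    using L_lt m_lt by (intro sum.mono_neutral_right) auto
  also have "\<dots> = sum d L + sum d (m ` L)"
    using finite m_disjoint by (intro sum.union_disjoint) auto
  also have "\<dots> = (\<Sum>k\<in>L. d k + d (m k))"
    by (simp add: sum.reindex[OF inj_m] sum.distrib)
  also have "\<dots> = 0"
  proof (rule sum.neutral, rule ballI)
    fix k assume k: "k \<in> L"
    obtain u where "(G ! m k = (0, u) \<and> G ! k = (u, t)) \<or> (G ! m k = (u, t) \<and> G ! k = (0, u))"
      using paths[OF k] by blast
    then have "incidence (0, t) v = incidence (G ! m k) v + incidence (G ! k) v"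
      using incidence_split[of 0 t v u] by auto
    moreover have "k \<notin> m ` L" "m k \<notin> L" "k < length G" "m k < length G"
      using k m_disjoint L_lt m_lt by auto
    ultimately show "d k + d (m k) = 0"
      unfolding d_def shear_def using k nth_G' by (simp add: algebra_simps)
  qed
  finally show ?thesis
    unfolding d_def netflow_incidence length_G' sum_subtractf by simp
qed

lemma flow_polytope_reroute:
  "flow_polytope t G' = shear (length G) L m (-1) ` {x \<in> flow_polytope t G. \<forall>k\<in>L. x (m k) \<le> x k}"
proof
  show "shear (length G) L m (-1) ` {x \<in> flow_polytope t G. \<forall>k\<in>L. x (m k) \<le> x k} \<subseteq> flow_polytope t G'"
    using netflow_shear unfolding flow_polytope_def length_G'
    by (auto simp: shear_def Rsp_def)
  show "flow_polytope t G' \<subseteq> shear (length G) L m (-1) ` {x \<in> flow_polytope t G. \<forall>k\<in>L. x (m k) \<le> x k}"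
  proof
    fix y assume y: "y \<in> flow_polytope t G'"
    define x where "x = shear (length G) L m 1 y"
    have y_x: "y = shear (length G) L m (-1) x"
      unfolding x_def using shear_inverse[OF m_disjoint, of y _ 1] y flow_polytope_Rsp length_G' by force
    have y_nonneg: "k < length G \<Longrightarrow> 0 \<le> y k" for k
      using y unfolding flow_polytope_def length_G' by blast
    have "x \<in> Rsp (length G)" "\<forall>k<length G. 0 \<le> x k"
      using y_nonneg m_lt unfolding x_def shear_def Rsp_def by auto
    moreover have "netflow G x v = netflow G' y v" for v
      unfolding y_x netflow_shear ..
    ultimately have "x \<in> flow_polytope t G"
      using y unfolding flow_polytope_def by simp
    moreover have "\<forall>k\<in>L. x (m k) \<le> x k"
      using y_nonneg m_lt L_lt m_disjoint unfolding x_def shear_def by auto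
    ultimately show "y \<in> shear (length G) L m (-1) ` {x \<in> flow_polytope t G. \<forall>k\<in>L. x (m k) \<le> x k}"
      using y_x by blast
  qed
qed

lemma int_equiv_reroute:
  "int_equiv (length G) {x \<in> flow_polytope t G. \<forall>k\<in>L. x (m k) \<le> x k} (length G') (flow_polytope t G')"
  unfolding flow_polytope_reroute length_G' using m_lt m_disjoint flow_polytope_Rsp[of t G]
  by (intro int_equiv_shear_image) auto

end

section \<open>Subdivision of the flow polytope of k^{a,b+1,c}_{n+2}\<close>

lemma mset_concat_map: "mset (concat (map g L)) = (\<Sum>i\<leftarrow>L. mset (g i))"
  by (induction L) auto

lemma mset_map_sum_list: "mset (map f L) = (\<Sum>i\<leftarrow>L. {#f i#})"
  by (induction L) auto

lemma replicate_mset_length: "replicate_mset (length L) z = (\<Sum>i\<leftarrow>L. {#z#})"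
  by (induction L) auto

lemmas mset_sum_list_simps =
  mset_append mset_concat_map mset_map_sum_list mset_replicate replicate_mset_length sum_list_addf

locale kgraph_cells =
  fixes n a b c :: nat
  assumes a_pos: "0 < a" and b_pos: "0 < b"
begin

definition inner_edges :: mgraph where
  "inner_edges = concat (map (\<lambda>i. concat (map (\<lambda>j. replicate c (i, j)) [i+1..<n+1])) [1..<n+1])"

definition spare_edges :: mgraph where
  "spare_edges =
     concat (map (\<lambda>i. replicate (a - 1) (0, i)) [1..<n+1]) @
     concat (map (\<lambda>i. replicate (b - 1) (i, n+1)) [1..<n+1]) @ inner_edges"

text \<open>For \<open>j < n\<close>, positions \<open>j\<close>, \<open>n + j\<close> and \<open>2 * n + j\<close> hold \<open>(0, j+1)\<close>, \<open>(j+1, n+1)\<close> and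
  \<open>(j+1, n+1)\<close>. In \<open>ordered_kgraphS S\<close> the edge at position \<open>j\<close> (if \<open>j+1 \<in> S\<close>) or \<open>n + j\<close>
  (otherwise) is rerouted to \<open>(0, n+1)\<close>; \<open>long_edges S\<close> collects the other positions, and
  \<open>partner\<close> swaps \<open>j\<close> and \<open>n + j\<close>.\<close>

definition ordered_kgraph :: mgraph where
  "ordered_kgraph =
     map (\<lambda>i. (0, i)) [1..<n+1] @ map (\<lambda>i. (i, n+1)) [1..<n+1] @ map (\<lambda>i. (i, n+1)) [1..<n+1] @
     spare_edges"

definition ordered_kgraphS :: "nat set \<Rightarrow> mgraph" where
  "ordered_kgraphS S =
     map (\<lambda>i. if i \<in> S then (0, n+1) else (0, i)) [1..<n+1] @
     map (\<lambda>i. if i \<in> S then (i, n+1) else (0, n+1)) [1..<n+1] @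
     map (\<lambda>i. (i, n+1)) [1..<n+1] @ spare_edges"

lemma mset_ordered_kgraph: "mset ordered_kgraph = mset (kgraph a (b+1) c n)"
proof -
  let ?V = "[1..<n+1]" and ?t = "n + 1"
  have "mset ordered_kgraph = (\<Sum>i\<leftarrow>?V. {#(0, i)#} + {#(i, ?t)#} + {#(i, ?t)#}
      + replicate_mset (a - 1) (0, i) + replicate_mset (b - 1) (i, ?t)) + mset inner_edges"
    unfolding ordered_kgraph_def spare_edges_def by (simp only: mset_sum_list_simps add_ac)
  also have "\<dots> = (\<Sum>i\<leftarrow>?V. replicate_mset a (0, i) + replicate_mset (b + 1) (i, ?t)) + mset inner_edges"
  proof -
    have "{#(0, i)#} + {#(i, ?t)#} + {#(i, ?t)#} + replicate_mset (a - 1) (0, i) + replicate_mset (b - 1) (i, ?t)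
        = replicate_mset a (0, i) + replicate_mset (b + 1) (i, ?t)" for i
      using a_pos b_pos by (cases a; cases b) auto
    then show ?thesis by (simp only:)
  qed
  also have "\<dots> = mset (kgraph a (b+1) c n)"
    unfolding kgraph_def inner_edges_def[symmetric] by (simp only: mset_sum_list_simps add_ac)
  finally show ?thesis .
qed

lemma mset_ordered_kgraphS: "mset (ordered_kgraphS S) = mset (kgraphS a b c n S)"
proof -
  let ?V = "[1..<n+1]" and ?t = "n + 1"
  have "mset (ordered_kgraphS S) = (\<Sum>i\<leftarrow>?V. {#if i \<in> S then (0, ?t) else (0, i)#}
      + {#if i \<in> S then (i, ?t) else (0, ?t)#} + {#(i, ?t)#}
      + replicate_mset (a - 1) (0, i) + replicate_mset (b - 1) (i, ?t)) + mset inner_edges"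
    unfolding ordered_kgraphS_def spare_edges_def by (simp only: mset_sum_list_simps add_ac)
  also have "\<dots> = (\<Sum>i\<leftarrow>?V. replicate_mset (if i \<in> S then a - 1 else a) (0, i)
      + replicate_mset (if i \<in> S then b + 1 else b) (i, ?t) + {#(0, ?t)#}) + mset inner_edges"
  proof -
    have "{#if i \<in> S then (0, ?t) else (0, i)#} + {#if i \<in> S then (i, ?t) else (0, ?t)#} + {#(i, ?t)#}
        + replicate_mset (a - 1) (0, i) + replicate_mset (b - 1) (i, ?t)
        = replicate_mset (if i \<in> S then a - 1 else a) (0, i)
        + replicate_mset (if i \<in> S then b + 1 else b) (i, ?t) + {#(0, ?t)#}" for i
      using a_pos b_pos by (cases a; cases b) auto
    then show ?thesis by (simp only:)
  qed
  also have "\<dots> = mset (kgraphS a b c n S)"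
  proof -
    have rep: "replicate_mset n (0, ?t) = (\<Sum>i\<leftarrow>?V. {#(0, ?t)#})"
      using replicate_mset_length[of ?V "(0, ?t)"] by (simp only: length_upt add_diff_cancel_right')
    show ?thesis
      unfolding kgraphS_def inner_edges_def[symmetric] mset_append mset_replicate rep
      by (simp only: mset_sum_list_simps add_ac)
  qed
  finally show ?thesis .
qed

definition long_edges :: "nat set \<Rightarrow> nat set" where
  "long_edges S = {k. k < n \<and> Suc k \<notin> S \<or> n \<le> k \<and> k < 2 * n \<and> Suc (k - n) \<in> S}"

definition partner :: "nat \<Rightarrow> nat" where
  "partner k = (if k < n then n + k else k - n)"

definition cell :: "nat set \<Rightarrow> (nat \<Rightarrow> real) set" where
  "cell S = {x \<in> flow_polytope (n+1) ordered_kgraph.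
     \<forall>j<n. if Suc j \<in> S then x j \<le> x (n + j) else x (n + j) \<le> x j}"

lemma length_ordered_kgraph: "length ordered_kgraph = 3 * n + length spare_edges"
  unfolding ordered_kgraph_def by simp

lemma length_ordered_kgraphS: "length (ordered_kgraphS S) = length ordered_kgraph"
  unfolding ordered_kgraphS_def ordered_kgraph_def by simp

lemma nth_ordered_kgraph:
  assumes "j < n"
  shows "ordered_kgraph ! j = (0, Suc j)" "ordered_kgraph ! (n + j) = (Suc j, n+1)"
    "ordered_kgraph ! (2 * n + j) = (Suc j, n+1)"
  using assms unfolding ordered_kgraph_def by (simp_all add: nth_append del: upt_Suc)

lemma partner_long_edges:
  "partner ` long_edges S = {k. k < n \<and> Suc k \<in> S \<or> n \<le> k \<and> k < 2 * n \<and> Suc (k - n) \<notin> S}"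
proof (intro equalityI subsetI)
  fix k assume "k \<in> {k. k < n \<and> Suc k \<in> S \<or> n \<le> k \<and> k < 2 * n \<and> Suc (k - n) \<notin> S}"
  then have "partner k \<in> long_edges S" "partner (partner k) = k"
    unfolding long_edges_def partner_def by auto
  then show "k \<in> partner ` long_edges S" by (metis image_eqI)
qed (auto simp: long_edges_def partner_def)

lemma nth_ordered_kgraphS:
  assumes "k < length ordered_kgraph"
  shows "ordered_kgraphS S ! k = (if k \<in> partner ` long_edges S then (0, n+1) else ordered_kgraph ! k)"
  using assms unfolding partner_long_edges ordered_kgraphS_def ordered_kgraph_def
  by (auto simp: nth_append simp del: upt_Suc)

lemma partner_partner: "k < 2 * n \<Longrightarrow> partner (partner k) = k"
  unfolding partner_def by auto

lemma reroute_ordered_kgraphS: "reroute ordered_kgraph (ordered_kgraphS S) (n+1) (long_edges S) partner"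
proof (unfold_locales)
  show "length (ordered_kgraphS S) = length ordered_kgraph" by (rule length_ordered_kgraphS)
  show "ordered_kgraphS S ! k = (if k \<in> partner ` long_edges S then (0, n+1) else ordered_kgraph ! k)"
    if "k < length ordered_kgraph" for k
    using that by (rule nth_ordered_kgraphS)
  have long: "long_edges S \<subseteq> {..<2 * n}" unfolding long_edges_def by auto
  then show "long_edges S \<subseteq> {..<length ordered_kgraph}"
    unfolding length_ordered_kgraph by auto
  show "partner ` long_edges S \<subseteq> {..<length ordered_kgraph}"
    unfolding partner_long_edges length_ordered_kgraph by auto
  show "inj_on partner (long_edges S)"
    using long partner_partner by (intro inj_on_inverseI[where g = partner]) auto
  show "partner ` long_edges S \<inter> long_edges S = {}"
    unfolding partner_long_edges unfolding long_edges_def by auto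
  fix k assume k: "k \<in> long_edges S"
  show "\<exists>u. (ordered_kgraph ! partner k = (0, u) \<and> ordered_kgraph ! k = (u, n+1))
      \<or> (ordered_kgraph ! partner k = (u, n+1) \<and> ordered_kgraph ! k = (0, u))"
  proof (cases "k < n")
    case True
    then show ?thesis by (simp add: partner_def nth_ordered_kgraph)
  next
    case False
    define j where "j = k - n"
    have "j < n" "k = n + j" using False k unfolding long_edges_def j_def by auto
    then show ?thesis by (simp add: partner_def nth_ordered_kgraph)
  qed
qed

lemma cell_eq_restriction:
  "cell S = {x \<in> flow_polytope (n+1) ordered_kgraph. \<forall>k\<in>long_edges S. x (partner k) \<le> x k}"
proof -
  have "(\<forall>k\<in>long_edges S. x (partner k) \<le> x k)
      \<longleftrightarrow> (\<forall>j<n. if Suc j \<in> S then x j \<le> x (n + j) else x (n + j) \<le> x j)" for x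
  proof
    assume le: "\<forall>k\<in>long_edges S. x (partner k) \<le> x k"
    show "\<forall>j<n. if Suc j \<in> S then x j \<le> x (n + j) else x (n + j) \<le> x j"
    proof (intro allI impI)
      fix j assume "j < n"
      then show "if Suc j \<in> S then x j \<le> x (n + j) else x (n + j) \<le> x j"
        using le[rule_format, of "n + j"] le[rule_format, of j]
        by (auto simp: long_edges_def partner_def)
    qed
  next
    assume le: "\<forall>j<n. if Suc j \<in> S then x j \<le> x (n + j) else x (n + j) \<le> x j"
    show "\<forall>k\<in>long_edges S. x (partner k) \<le> x k"
    proof
      fix k assume "k \<in> long_edges S"
      then consider "k < n" "Suc k \<notin> S" | "n \<le> k" "k - n < n" "Suc (k - n) \<in> S"
        unfolding long_edges_def by auto
      then show "x (partner k) \<le> x k"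
        using le[rule_format, of k] le[rule_format, of "k - n"] by cases (auto simp: partner_def)
    qed
  qed
  then show ?thesis unfolding cell_def by blast
qed

lemma int_equiv_cell:
  "int_equiv (length ordered_kgraph) (cell S) (length (kgraphS a b c n S)) (flow_polytope (n+1) (kgraphS a b c n S))"
  using reroute.int_equiv_reroute[OF reroute_ordered_kgraphS, folded cell_eq_restriction]
    int_equiv_flow_polytope_mset[OF mset_ordered_kgraphS[symmetric]]
  by (rule int_equiv_trans)

lemma Union_cells: "(\<Union>S\<in>Pow {1..n}. cell S) = flow_polytope (n+1) ordered_kgraph"
proof
  show "flow_polytope (n+1) ordered_kgraph \<subseteq> (\<Union>S\<in>Pow {1..n}. cell S)"
  proof
    fix x assume x: "x \<in> flow_polytope (n+1) ordered_kgraph"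
    define S where "S = {i \<in> {1..n}. x (i - 1) \<le> x (n + (i - 1))}"
    have "if Suc j \<in> S then x j \<le> x (n + j) else x (n + j) \<le> x j" if "j < n" for j
      using that unfolding S_def by auto
    then have "x \<in> cell S" using x unfolding cell_def by blast
    moreover have "S \<in> Pow {1..n}" unfolding S_def by auto
    ultimately show "x \<in> (\<Union>S\<in>Pow {1..n}. cell S)" by blast
  qed
qed (auto simp: cell_def)

text \<open>The two paths through the copies \<open>n + j\<close> and \<open>2 * n + j\<close> of \<open>(j+1, n+1)\<close> let an
  interior point lower the flow on \<open>n + j\<close> alone.\<close>

lemma interior_cell_strict:
  assumes x: "x \<in> interior_in (length ordered_kgraph) (flow_polytope (n+1) ordered_kgraph) (cell S)"
    and j: "j < n" "Suc j \<in> S"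
  shows "x j < x (n + j)"
proof -
  let ?F = "flow_polytope (n+1) ordered_kgraph"
  have len: "j < length ordered_kgraph" "n + j < length ordered_kgraph" "2 * n + j < length ordered_kgraph"
    using j(1) unfolding length_ordered_kgraph by auto
  have "x \<in> ?F" using x unfolding interior_in_def cell_def by blast
  moreover have "(\<lambda>k. if k = j \<or> k = 2 * n + j then 1 else 0) \<in> ?F"
    using flow_polytope_path[OF len(1,3)] nth_ordered_kgraph[OF j(1)] by simp
  moreover have "(\<lambda>k. if k = j \<or> k = n + j then 1 else 0) \<in> ?F"
    using flow_polytope_path[OF len(1,2)] nth_ordered_kgraph[OF j(1)] by simp
  ultimately obtain r where r: "0 < r" and w: "(\<lambda>i. x i + r * ((if i = j \<or> i = 2 * n + j then 1 else 0)
      - (if i = j \<or> i = n + j then 1 else 0))) \<in> cell S" (is "?w \<in> _")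
    by (rule interior_in_perturb[OF x])
  then have "if Suc j \<in> S then ?w j \<le> ?w (n + j) else ?w (n + j) \<le> ?w j"
    using j(1) unfolding cell_def by blast
  then show ?thesis using r j by simp
qed

lemma interior_cells_disjoint:
  assumes "S \<subseteq> {1..n}" "T \<subseteq> {1..n}" "S \<noteq> T"
  shows "interior_in (length ordered_kgraph) (flow_polytope (n+1) ordered_kgraph) (cell S) \<inter>
    interior_in (length ordered_kgraph) (flow_polytope (n+1) ordered_kgraph) (cell T) = {}"
proof -
  have sep: "x \<notin> cell R'"
    if "x \<in> interior_in (length ordered_kgraph) (flow_polytope (n+1) ordered_kgraph) (cell R)"
      "j < n" "Suc j \<in> R" "Suc j \<notin> R'" for x j R R'
  proof
    assume "x \<in> cell R'"
    then have "x (n + j) \<le> x j" using that(2,4) unfolding cell_def by simp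
    then show False using interior_cell_strict[OF that(1-3)] by simp
  qed
  obtain i where i: "i \<in> {1..n}" "i \<in> S \<and> i \<notin> T \<or> i \<in> T \<and> i \<notin> S" using assms by blast
  define j where "j = i - 1"
  have "j < n" "Suc j = i" using i(1) unfolding j_def by auto
  then show ?thesis using i(2) sep interior_in_subset by blast
qed

end

theorem lemma5p3:
  fixes n a b c :: nat
  assumes "0 < n" and "0 < a" and "0 < b"
  shows "\<exists>q (P :: nat set \<Rightarrow> (nat \<Rightarrow> real) set).
     (\<forall>S. S \<subseteq> {1..n} \<longrightarrow>
        int_equiv q (P S) (length (kgraphS a b c n S)) (flow_polytope (n+1) (kgraphS a b c n S))) \<and>
     (\<forall>S T. S \<subseteq> {1..n} \<longrightarrow> T \<subseteq> {1..n} \<longrightarrow> S \<noteq> T \<longrightarrow>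
        interior_in q (\<Union>S'\<in>Pow {1..n}. P S') (P S) \<inter>
        interior_in q (\<Union>S'\<in>Pow {1..n}. P S') (P T) = {}) \<and>
     int_equiv (length (kgraph a (b+1) c n)) (flow_polytope (n+1) (kgraph a (b+1) c n))
               q (\<Union>S\<in>Pow {1..n}. P S)"
proof -
  interpret kgraph_cells n a b c using assms(2,3) by unfold_locales
  have "int_equiv (length (kgraph a (b+1) c n)) (flow_polytope (n+1) (kgraph a (b+1) c n))
      (length ordered_kgraph) (\<Union>S\<in>Pow {1..n}. cell S)"
    unfolding Union_cells using mset_ordered_kgraph by (rule int_equiv_flow_polytope_mset)
  then show ?thesis
    using int_equiv_cell interior_cells_disjoint[folded Union_cells]
    by (intro exI[of _ "length ordered_kgraph"] exI[of _ cell] conjI) blast+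
qed

end
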